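(* Let $M := \langle X \mid R\rangle$ where $X$ is finite, and suppose that $M$ is normalizing, cancellative, and BF. Then $M$ has accepted elasticity.
   Context: For a set $X$, $\langle X\rangle$ is the free monoid on $X$ (identity $1$); $M=\langle X\mid R\rangle$ is the monoid presented by generators $X$ and relations $R\subseteq\langle X\rangle\times\langle X\rangle$. $|a|$ is word length; $a=_M b$ means equal images in $M$. $M$ is normalizing if $aM=Ma$ for all $a\in M$; cancellative if $ab=ac$ or $ba=ca$ implies $b=c$. $\mathsf{L}_M(a):=\{|b| : b\in\langle X\rangle,\ b=_M a\}$, $\mathcal{L}(M):=\{\mathsf{L}_M(a): a\in\langle X\rangle\}$; $M$ is BF if every $\mathsf{L}_M(a)$ is finite. For $L\subseteq\mathbb{N}$, $\rho(L):=\sup(L\cap\mathbb{N}^+)/\min(L\cap\mathbb{N}^+)$ if $L\cap\mathbb{N}^+\ne\emptyset$, and $\rho(L):=0$ otherwise; $\rho(M):=\sup\{\rho(L): L\in\mathcal{L}(M)\}$. $M$ has accepted elasticity if $\rho(M)=\rho(L)<\infty$ for some $L\in\mathcal{L}(M)$. *)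

theory Defs
  imports "HOL-Library.Extended_Real"
begin

text \<open>Words over the generators are lists; the free monoid on X is lists X.
  pres_eq R is the monoid congruence on words generated by the relations R,
  so that a =_M b iff pres_eq R a b.\<close>

inductive pres_eq :: "('a list \<times> 'a list) set \<Rightarrow> 'a list \<Rightarrow> 'a list \<Rightarrow> bool"
  for R where
  base: "(u, v) \<in> R \<Longrightarrow> pres_eq R (p @ u @ q) (p @ v @ q)"
| refl: "pres_eq R a a"
| sym: "pres_eq R a b \<Longrightarrow> pres_eq R b a"
| trans: "pres_eq R a b \<Longrightarrow> pres_eq R b c \<Longrightarrow> pres_eq R a c"

definition normalizing :: "'a set \<Rightarrow> ('a list \<times> 'a list) set \<Rightarrow> bool" where
  "normalizing X R \<longleftrightarrow>
     (\<forall>a\<in>lists X. \<forall>b\<in>lists X.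
        (\<exists>c\<in>lists X. pres_eq R (a @ b) (c @ a)) \<and>
        (\<exists>c\<in>lists X. pres_eq R (b @ a) (a @ c)))"

definition cancellative :: "'a set \<Rightarrow> ('a list \<times> 'a list) set \<Rightarrow> bool" where
  "cancellative X R \<longleftrightarrow>
     (\<forall>a\<in>lists X. \<forall>b\<in>lists X. \<forall>c\<in>lists X.
        (pres_eq R (a @ b) (a @ c) \<longrightarrow> pres_eq R b c) \<and>
        (pres_eq R (b @ a) (c @ a) \<longrightarrow> pres_eq R b c))"

definition length_set :: "'a set \<Rightarrow> ('a list \<times> 'a list) set \<Rightarrow> 'a list \<Rightarrow> nat set" where
  "length_set X R a = {length b | b. b \<in> lists X \<and> pres_eq R b a}"

definition length_sets :: "'a set \<Rightarrow> ('a list \<times> 'a list) set \<Rightarrow> nat set set" where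
  "length_sets X R = length_set X R ` lists X"

definition BF :: "'a set \<Rightarrow> ('a list \<times> 'a list) set \<Rightarrow> bool" where
  "BF X R \<longleftrightarrow> (\<forall>a\<in>lists X. finite (length_set X R a))"

definition rho_set :: "nat set \<Rightarrow> ereal" where
  "rho_set L = (if L \<inter> {0<..} = {} then 0
     else (SUP n\<in>L \<inter> {0<..}. ereal (real n)) / ereal (real (LEAST n. n \<in> L \<and> 0 < n)))"

definition elasticity :: "'a set \<Rightarrow> ('a list \<times> 'a list) set \<Rightarrow> ereal" where
  "elasticity X R = (SUP L\<in>length_sets X R. rho_set L)"

definition accepted_elasticity :: "'a set \<Rightarrow> ('a list \<times> 'a list) set \<Rightarrow> bool" where
  "accepted_elasticity X R \<longleftrightarrow>
     (\<exists>L\<in>length_sets X R. elasticity X R = rho_set L \<and> rho_set L < \<infinity>)"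

end

theory Submission
  imports Defs "HOL-Library.Sublist" "HOL-Library.Infinite_Set"
begin

text \<open>Label each letter of a word by the set of pairs of generators \<open>(x, z)\<close> with
  \<open>x p = p z\<close> in \<open>M\<close>, where \<open>p\<close> is the prefix in front of the letter. Normality and
  cancellativity show that two prefixes with the same label conjugate every word alike, and
  from this: if the label word of \<open>u\<close> embeds as a subsequence into that of \<open>u'\<close>, then
  \<open>u' = u t\<close> in \<open>M\<close> with \<open>|u'| = |u| + |t|\<close>.

  Consider pairs \<open>(u, v)\<close> of words equal in \<open>M\<close>, ordered by embedding of both label words.
  By Higman's lemma there are only finitely many minimal pairs. A non-minimal pair \<open>(u', v')\<close>
  lies above a smaller pair \<open>(u, v)\<close> and then splits as \<open>u' = u t\<close>, \<open>v' = v t'\<close> with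
  \<open>(t, t')\<close> again a pair, by cancellation. So \<open>|v'|/|u'|\<close> is a mediant of two ratios of
  smaller pairs, and the largest ratio \<open>|v|/|u|\<close> over all pairs is attained at a minimal pair.
  This largest ratio is the elasticity, and it is the elasticity of the length set of \<open>u\<close>.\<close>

section \<open>Higman's lemma\<close>

definition good :: "('b \<Rightarrow> 'b \<Rightarrow> bool) \<Rightarrow> (nat \<Rightarrow> 'b) \<Rightarrow> bool" where
  "good P f \<longleftrightarrow> (\<exists>i j. i < j \<and> P (f i) (f j))"

definition bad_prefix :: "'b set \<Rightarrow> 'b list list \<Rightarrow> bool" where
  "bad_prefix A ws \<longleftrightarrow>
     (\<exists>g. (\<forall>i. g i \<in> lists A) \<and> \<not> good subseq g \<and> (\<forall>i<length ws. g i = ws ! i))"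

fun min_bad_prefix :: "'b set \<Rightarrow> nat \<Rightarrow> 'b list list" where
  "min_bad_prefix A 0 = []"
| "min_bad_prefix A (Suc n) =
     min_bad_prefix A n @ [arg_min length (\<lambda>w. bad_prefix A (min_bad_prefix A n @ [w]))]"

definition min_bad_seq :: "'b set \<Rightarrow> nat \<Rightarrow> 'b list" where
  "min_bad_seq A i = last (min_bad_prefix A (Suc i))"

lemma min_bad_prefix_eq_map: "min_bad_prefix A n = map (min_bad_seq A) [0..<n]"
  by (induction n) (simp_all add: min_bad_seq_def)

lemma bad_prefix_min_bad_prefix:
  assumes "bad_prefix A []"
  shows "bad_prefix A (min_bad_prefix A n)"
proof (induction n)
  case 0
  then show ?case using assms by simp
next
  case (Suc n)
  then obtain g where g: "\<forall>i. g i \<in> lists A" "\<not> good subseq g"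
      "\<forall>i<length (min_bad_prefix A n). g i = min_bad_prefix A n ! i"
    unfolding bad_prefix_def by blast
  have "bad_prefix A (min_bad_prefix A n @ [g n])"
    unfolding bad_prefix_def using g
    by (intro exI[of _ g]) (auto simp: min_bad_prefix_eq_map nth_append less_Suc_eq)
  then show ?case
    using arg_min_natI[of "\<lambda>w. bad_prefix A (min_bad_prefix A n @ [w])" "g n" length] by simp
qed

lemma min_bad_seq_minimal:
  assumes "bad_prefix A (map (min_bad_seq A) [0..<n] @ [w])"
  shows "length (min_bad_seq A n) \<le> length w"
proof -
  have "min_bad_seq A n = arg_min length (\<lambda>w. bad_prefix A (map (min_bad_seq A) [0..<n] @ [w]))"
    by (simp add: min_bad_seq_def min_bad_prefix_eq_map[symmetric])
  then show ?thesis
    using arg_min_nat_le[of "\<lambda>w. bad_prefix A (map (min_bad_seq A) [0..<n] @ [w])" w length] assms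
    by simp
qed

lemma min_bad_seq_bad:
  assumes "bad_prefix A []"
  shows "min_bad_seq A i \<in> lists A" and "\<not> good subseq (min_bad_seq A)"
proof -
  have extends: "\<exists>g. (\<forall>i. g i \<in> lists A) \<and> \<not> good subseq g \<and> (\<forall>i<n. g i = min_bad_seq A i)" for n
    using bad_prefix_min_bad_prefix[OF assms, of n] unfolding bad_prefix_def
    by (simp add: min_bad_prefix_eq_map)
  then show "min_bad_seq A i \<in> lists A" by (metis lessI)
  show "\<not> good subseq (min_bad_seq A)"
  proof
    assume "good subseq (min_bad_seq A)"
    then obtain i j where ij: "i < j" "subseq (min_bad_seq A i) (min_bad_seq A j)"
      unfolding good_def by blast
    obtain g where g: "\<not> good subseq g" "\<forall>k<Suc j. g k = min_bad_seq A k"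
      using extends[of "Suc j"] by blast
    then have "subseq (g i) (g j)" using ij by simp
    then show False using g(1) ij(1) unfolding good_def by blast
  qed
qed

lemma bad_seq_tails:
  assumes bad: "\<not> good subseq f" and e: "strict_mono e"
    and cons: "\<And>k. f (e k) = a # tl (f (e k))"
  shows "\<not> good subseq (\<lambda>i. if i < e 0 then f i else tl (f (e (i - e 0))))"
    (is "\<not> good subseq ?g")
proof
  assume "good subseq ?g"
  then obtain i j where ij: "i < j" "subseq (?g i) (?g j)" unfolding good_def by blast
  have "\<exists>i' j'. i' < j' \<and> subseq (f i') (f j')"
  proof (cases "i < e 0")
    case i: True
    show ?thesis
    proof (cases "j < e 0")
      case True
      then show ?thesis using i ij by auto
    next
      case False
      then have "subseq (f i) (tl (f (e (j - e 0))))" using i ij by simp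
      then have "subseq (f i) (f (e (j - e 0)))" using cons by (metis list_emb_Cons)
      moreover have "i < e (j - e 0)" using i e by (metis le0 less_le_trans strict_mono_less_eq)
      ultimately show ?thesis by blast
    qed
  next
    case False
    then have "subseq (tl (f (e (i - e 0)))) (tl (f (e (j - e 0))))" using ij by simp
    then have "subseq (f (e (i - e 0))) (f (e (j - e 0)))" using cons by (metis subseq_Cons2)
    moreover have "e (i - e 0) < e (j - e 0)" using False ij strict_mono_less[OF e] by simp
    ultimately show ?thesis by blast
  qed
  then show False using bad unfolding good_def by simp
qed

text \<open>Nash-Williams' minimal bad sequence argument: deleting the common first letter from
  infinitely many members of a minimal bad sequence would give a smaller bad sequence.\<close>

theorem higman:
  assumes "finite A" and "\<And>i. f i \<in> lists A"
  shows "good subseq f"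
proof (rule ccontr)
  assume "\<not> good subseq f"
  then have bad0: "bad_prefix A []" using assms(2) unfolding bad_prefix_def by auto
  define m where "m = min_bad_seq A"
  have mA: "m i \<in> lists A" for i
    using min_bad_seq_bad(1)[OF bad0] by (simp add: m_def)
  have mbad: "\<not> good subseq m"
    using min_bad_seq_bad(2)[OF bad0] by (simp add: m_def)
  have m_nonempty: "m i \<noteq> []" for i
    using mbad unfolding good_def by (metis lessI list_emb_Nil)
  have "finite (range (\<lambda>i. hd (m i)))"
    using mA m_nonempty by (intro finite_subset[OF _ assms(1)]) (auto intro: hd_in_set)
  then obtain i0 where "infinite {i. hd (m i) = hd (m i0)}"
    using pigeonhole_infinite[of UNIV "\<lambda>i. hd (m i)"] by auto
  then obtain e :: "nat \<Rightarrow> nat" where e: "strict_mono e" and e_hd: "\<And>k. hd (m (e k)) = hd (m i0)"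
    using infinite_enumerate by blast
  define g where "g i = (if i < e 0 then m i else tl (m (e (i - e 0))))" for i
  have "m (e k) = hd (m i0) # tl (m (e k))" for k
    using e_hd[of k] m_nonempty[of "e k"] by (cases "m (e k)") auto
  then have "\<not> good subseq g"
    unfolding g_def by (rule bad_seq_tails[OF mbad e])
  moreover have "g i \<in> lists A" for i
    using mA m_nonempty unfolding g_def by (auto dest: list.set_sel(2))
  ultimately have "bad_prefix A (map m [0..<e 0] @ [tl (m (e 0))])"
    unfolding bad_prefix_def
    by (intro exI[of _ g]) (auto simp: g_def nth_append less_Suc_eq)
  then have "length (m (e 0)) \<le> length (tl (m (e 0)))"
    unfolding m_def by (rule min_bad_seq_minimal)
  then show False using m_nonempty[of "e 0"] by (cases "m (e 0)") auto
qed

section \<open>Length ratios and elasticity\<close>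

definition length_ratio :: "'b list \<times> 'b list \<Rightarrow> real" where
  "length_ratio a = real (length (snd a)) / real (length (fst a))"

lemma mediant_le_max:
  fixes a b c d :: real
  assumes "0 < b" "0 < d"
  shows "(a + c) / (b + d) \<le> max (a / b) (c / d)"
proof -
  let ?r = "max (a / b) (c / d)"
  have "a / b \<le> ?r" "c / d \<le> ?r" by simp_all
  then have "a \<le> ?r * b" "c \<le> ?r * d" using assms by (metis pos_divide_le_eq)+
  then have "a + c \<le> ?r * (b + d)" by (simp add: algebra_simps)
  then show ?thesis using assms by (simp add: pos_divide_le_eq)
qed

lemma rho_set_eq:
  assumes "finite L" "L \<inter> {0<..} \<noteq> {}"
  shows "rho_set L = ereal (real (Max (L \<inter> {0<..})) / real (LEAST n. n \<in> L \<and> 0 < n))"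
proof -
  let ?S = "L \<inter> {0<..}"
  have "finite ?S" using assms(1) by simp
  then have "Max ?S \<in> ?S" using assms(2) by (rule Max_in)
  then have "(SUP n\<in>?S. ereal (real n)) = ereal (real (Max ?S))"
    using \<open>finite ?S\<close> by (intro antisym SUP_least SUP_upper) auto
  moreover have "0 < (LEAST n. n \<in> L \<and> 0 < n)"
    using assms(2) LeastI_ex[of "\<lambda>n. n \<in> L \<and> 0 < n"] by blast
  ultimately show ?thesis unfolding rho_set_def using assms(2) by simp
qed

lemma rho_set_le:
  assumes "finite L" "0 \<le> r"
    and "\<And>m n. m \<in> L \<Longrightarrow> n \<in> L \<Longrightarrow> 0 < m \<Longrightarrow> 0 < n \<Longrightarrow> real m / real n \<le> r"
  shows "rho_set L \<le> ereal r"
proof (cases "L \<inter> {0<..} = {}")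
  case True
  then show ?thesis unfolding rho_set_def using assms(2) by simp
next
  case False
  then have "Max (L \<inter> {0<..}) \<in> L \<inter> {0<..}" using assms(1) by (intro Max_in) auto
  moreover have "(LEAST n. n \<in> L \<and> 0 < n) \<in> L \<and> 0 < (LEAST n. n \<in> L \<and> 0 < n)"
    using False LeastI_ex[of "\<lambda>n. n \<in> L \<and> 0 < n"] by auto
  ultimately show ?thesis using rho_set_eq[OF assms(1) False] assms(3) by simp
qed

lemma rho_set_ge:
  assumes "finite L" "m \<in> L" "n \<in> L" "0 < m" "0 < n"
  shows "ereal (real m / real n) \<le> rho_set L"
proof -
  have ne: "L \<inter> {0<..} \<noteq> {}" using assms by auto
  have "m \<le> Max (L \<inter> {0<..})" using assms by (intro Max_ge) auto
  moreover have "(LEAST n. n \<in> L \<and> 0 < n) \<le> n" using assms by (intro Least_le) auto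
  moreover have "0 < (LEAST n. n \<in> L \<and> 0 < n)"
    using assms LeastI[of "\<lambda>n. n \<in> L \<and> 0 < n" n] by auto
  ultimately have "real m / real n \<le> real (Max (L \<inter> {0<..})) / real (LEAST n. n \<in> L \<and> 0 < n)"
    by (intro frac_le) auto
  then show ?thesis using rho_set_eq[OF assms(1) ne] by simp
qed

lemma accepted_elasticityI:
  assumes "u \<in> lists X" "rho_set (length_set X R u) < \<infinity>"
    and "\<And>a. a \<in> lists X \<Longrightarrow> rho_set (length_set X R a) \<le> rho_set (length_set X R u)"
  shows "accepted_elasticity X R"
proof -
  have "elasticity X R = rho_set (length_set X R u)"
    unfolding elasticity_def length_sets_def image_image
    using assms(1,3) by (intro antisym SUP_least SUP_upper2) auto
  then show ?thesis using assms(1,2) unfolding accepted_elasticity_def length_sets_def by blast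
qed

section \<open>Monoid presentations\<close>

lemma pres_eq_cong: "pres_eq R a b \<Longrightarrow> pres_eq R (p @ a @ q) (p @ b @ q)"
proof (induction rule: pres_eq.induct)
  case (base u v p' q')
  then show ?case using pres_eq.base[of u v R "p @ p'" "q' @ q"] by simp
qed (auto intro: pres_eq.intros)

lemma pres_eq_append_left: "pres_eq R a b \<Longrightarrow> pres_eq R (p @ a) (p @ b)"
  using pres_eq_cong[of R a b p "[]"] by simp

lemma pres_eq_append_right: "pres_eq R a b \<Longrightarrow> pres_eq R (a @ q) (b @ q)"
  using pres_eq_cong[of R a b "[]" q] by simp

lemma pres_eq_append: "pres_eq R a b \<Longrightarrow> pres_eq R c d \<Longrightarrow> pres_eq R (a @ c) (b @ d)"
  by (meson pres_eq.trans pres_eq_append_left pres_eq_append_right)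

declare pres_eq.trans [trans]

locale normalizing_cancellative_BF =
  fixes X :: "'a set" and R :: "('a list \<times> 'a list) set"
  assumes finite_gens: "finite X"
    and normal: "normalizing X R"
    and cancel: "cancellative X R"
    and bf: "BF X R"
begin

abbreviation pres_eq_M :: "'a list \<Rightarrow> 'a list \<Rightarrow> bool" (infix "=\<^sub>M" 50) where
  "a =\<^sub>M b \<equiv> pres_eq R a b"

lemma normal_left: "a \<in> lists X \<Longrightarrow> b \<in> lists X \<Longrightarrow> \<exists>c\<in>lists X. a @ b =\<^sub>M c @ a"
  using normal unfolding normalizing_def by blast

lemma normal_right: "a \<in> lists X \<Longrightarrow> b \<in> lists X \<Longrightarrow> \<exists>c\<in>lists X. b @ a =\<^sub>M a @ c"
  using normal unfolding normalizing_def by blast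

lemma cancel_left:
  "a \<in> lists X \<Longrightarrow> b \<in> lists X \<Longrightarrow> c \<in> lists X \<Longrightarrow> a @ b =\<^sub>M a @ c \<Longrightarrow> b =\<^sub>M c"
  using cancel unfolding cancellative_def by blast

lemma cancel_right:
  "a \<in> lists X \<Longrightarrow> b \<in> lists X \<Longrightarrow> c \<in> lists X \<Longrightarrow> b @ a =\<^sub>M c @ a \<Longrightarrow> b =\<^sub>M c"
  using cancel unfolding cancellative_def by blast

lemma finite_length_set: "a \<in> lists X \<Longrightarrow> finite (length_set X R a)"
  using bf unfolding BF_def by blast

lemma eq_Nil_imp_Nil:
  assumes "w \<in> lists X" "w =\<^sub>M []"
  shows "w = []"
proof (rule ccontr)
  assume "w \<noteq> []"
  have "concat (replicate k w) =\<^sub>M []" for k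
    by (induction k) (auto intro: pres_eq.refl pres_eq_append[OF assms(2), of _ "[]", simplified])
  then have "range (\<lambda>k. k * length w) \<subseteq> length_set X R []"
    unfolding length_set_def using assms(1)
    by (auto intro!: exI[of _ "concat (replicate _ w)"] simp: length_concat sum_list_replicate)
  moreover have "infinite (range (\<lambda>k. k * length w))"
    using \<open>w \<noteq> []\<close> by (intro range_inj_infinite) (auto simp: inj_def)
  ultimately show False using finite_length_set[of "[]"] finite_subset by auto
qed

lemma length_set_Nil: "length_set X R [] = {0}"
  unfolding length_set_def using eq_Nil_imp_Nil by (auto intro: pres_eq.refl)

lemma normal_left_nonempty:
  assumes "a \<in> lists X" "b \<in> lists X" "b \<noteq> []"
  shows "\<exists>c\<in>lists X. c \<noteq> [] \<and> a @ b =\<^sub>M c @ a"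
proof -
  obtain c where c: "c \<in> lists X" "a @ b =\<^sub>M c @ a" using normal_left[OF assms(1,2)] by blast
  have "c \<noteq> []"
  proof
    assume "c = []"
    then have "b =\<^sub>M []" using c cancel_left[OF assms(1,2), of "[]"] by simp
    then show False using eq_Nil_imp_Nil assms(2,3) by blast
  qed
  then show ?thesis using c by blast
qed

lemma normal_right_nonempty:
  assumes "a \<in> lists X" "b \<in> lists X" "b \<noteq> []"
  shows "\<exists>c\<in>lists X. c \<noteq> [] \<and> b @ a =\<^sub>M a @ c"
proof -
  obtain c where c: "c \<in> lists X" "b @ a =\<^sub>M a @ c" using normal_right[OF assms(1,2)] by blast
  have "c \<noteq> []"
  proof
    assume "c = []"
    then have "b =\<^sub>M []" using c cancel_right[OF assms(1,2), of "[]"] by simp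
    then show False using eq_Nil_imp_Nil assms(2,3) by blast
  qed
  then show ?thesis using c by blast
qed

definition atom :: "'a \<Rightarrow> bool" where
  "atom x \<longleftrightarrow> x \<in> X \<and> (\<forall>w\<in>lists X. w =\<^sub>M [x] \<longrightarrow> length w = 1)"

text \<open>A longest representative consists of atoms: replacing a non-atom letter by a
  representative of length at least two would make it longer.\<close>

lemma exists_atom_word:
  assumes "a \<in> lists X"
  shows "\<exists>a'\<in>lists (Collect atom). a' =\<^sub>M a"
proof -
  let ?S = "length_set X R a"
  have "length a \<in> ?S" unfolding length_set_def using assms pres_eq.refl by auto
  then have "Max ?S \<in> ?S" using finite_length_set[OF assms] by (intro Max_in) auto
  then obtain w where w: "w \<in> lists X" "w =\<^sub>M a" "length w = Max ?S"
    unfolding length_set_def by force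
  have "w \<in> lists (Collect atom)"
  proof (rule ccontr)
    assume "w \<notin> lists (Collect atom)"
    then obtain i where i: "i < length w" "\<not> atom (w ! i)"
      by (metis in_lists_conv_set in_set_conv_nth mem_Collect_eq)
    have "w ! i \<in> X" using w(1) i(1) by auto
    then obtain z where z: "z \<in> lists X" "z =\<^sub>M [w ! i]" "length z \<noteq> 1"
      using i(2) unfolding atom_def by auto
    have "z \<noteq> []" using eq_Nil_imp_Nil[of "[w ! i]"] z(2) \<open>w ! i \<in> X\<close> pres_eq.sym by auto
    define w' where "w' = take i w @ z @ drop (Suc i) w"
    have "w = take i w @ [w ! i] @ drop (Suc i) w" using i(1) by (simp add: id_take_nth_drop)
    then have "w' =\<^sub>M a" unfolding w'_def using pres_eq_cong[OF z(2)] w(2) pres_eq.trans by metis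
    moreover have "w' \<in> lists X" unfolding w'_def using w(1) z(1)
      by (auto dest: in_set_takeD in_set_dropD)
    ultimately have "length w' \<in> ?S" unfolding length_set_def by auto
    then have "length w' \<le> length w" using w(3) finite_length_set[OF assms] by simp
    moreover have "length w' = length w + length z - 1" unfolding w'_def using i(1) by simp
    ultimately show False using \<open>z \<noteq> []\<close> z(3) by (cases z) auto
  qed
  then show ?thesis using w(2) by blast
qed

section \<open>Conjugation pairs and label words\<close>

definition conj_pairs :: "'a list \<Rightarrow> ('a \<times> 'a) set" where
  "conj_pairs p = {(x, z). x \<in> X \<and> z \<in> X \<and> x # p =\<^sub>M p @ [z]}"

lemma conj_pairs_cong:
  assumes "p =\<^sub>M p'"
  shows "conj_pairs p = conj_pairs p'"
proof -
  have "x # p =\<^sub>M p @ [z] \<longleftrightarrow> x # p' =\<^sub>M p' @ [z]" for x z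
    using pres_eq_append_left[OF assms, of "[x]"] pres_eq_append_right[OF assms, of "[z]"]
    by (auto intro: pres_eq.sym pres_eq.trans)
  then show ?thesis unfolding conj_pairs_def by auto
qed

lemma atom_conj_letter:
  assumes "atom x" "p \<in> lists X"
  shows "\<exists>z\<in>X. x # p =\<^sub>M p @ [z]"
proof -
  have x: "x \<in> X" using assms(1) by (simp add: atom_def)
  obtain c where c: "c \<in> lists X" "c \<noteq> []" "[x] @ p =\<^sub>M p @ c"
    using normal_right_nonempty[OF assms(2), of "[x]"] x by auto
  then obtain c1 cs where c1: "c = c1 # cs" by (cases c) auto
  show ?thesis
  proof (cases "cs = []")
    case True
    then show ?thesis using c c1 by auto
  next
    case False
    obtain d1 where d1: "d1 \<in> lists X" "d1 \<noteq> []" "p @ [c1] =\<^sub>M d1 @ p"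
      using normal_left_nonempty[OF assms(2), of "[c1]"] c(1) c1 by auto
    obtain d2 where d2: "d2 \<in> lists X" "d2 \<noteq> []" "p @ cs =\<^sub>M d2 @ p"
      using normal_left_nonempty[OF assms(2), of cs] c(1) c1 False by auto
    have "[x] @ p =\<^sub>M p @ [c1] @ cs" using c(3) c1 by simp
    also have "\<dots> =\<^sub>M d1 @ p @ cs" using pres_eq_append_right[OF d1(3), of cs] by simp
    also have "\<dots> =\<^sub>M (d1 @ d2) @ p" using pres_eq_append_left[OF d2(3), of d1] by simp
    finally have "[x] =\<^sub>M d1 @ d2" using cancel_right[OF assms(2)] x d1(1) d2(1) by simp
    then have "d1 @ d2 =\<^sub>M [x]" by (rule pres_eq.sym)
    moreover have "d1 @ d2 \<in> lists X" using d1(1) d2(1) by simp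
    ultimately have "length (d1 @ d2) = 1" using assms(1) unfolding atom_def by blast
    then show ?thesis using d1(2) d2(2) by (cases d1) auto
  qed
qed

lemma atom_word_conj:
  assumes "p \<in> lists X" "conj_pairs p = conj_pairs q"
  shows "a \<in> lists (Collect atom) \<Longrightarrow> \<exists>z\<in>lists X. a @ p =\<^sub>M p @ z \<and> a @ q =\<^sub>M q @ z"
proof (induction a)
  case Nil
  then show ?case using pres_eq.refl by (intro bexI[of _ "[]"]) auto
next
  case (Cons x a)
  then obtain z where z: "z \<in> lists X" "a @ p =\<^sub>M p @ z" "a @ q =\<^sub>M q @ z" by auto
  obtain y where y: "y \<in> X" "x # p =\<^sub>M p @ [y]"
    using atom_conj_letter[OF _ assms(1)] Cons.prems by auto
  have "(x, y) \<in> conj_pairs q"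
    using assms(2) y Cons.prems unfolding conj_pairs_def atom_def by auto
  then have yq: "x # q =\<^sub>M q @ [y]" unfolding conj_pairs_def by auto
  have step: "(x # a) @ r =\<^sub>M r @ y # z" if "a @ r =\<^sub>M r @ z" "x # r =\<^sub>M r @ [y]" for r
  proof -
    have "(x # a) @ r =\<^sub>M x # r @ z" using pres_eq_append_left[OF that(1), of "[x]"] by simp
    also have "\<dots> =\<^sub>M r @ y # z" using pres_eq_append_right[OF that(2), of z] by simp
    finally show ?thesis .
  qed
  show ?case using step[OF z(2) y(2)] step[OF z(3) yq] z(1) y(1) by (intro bexI[of _ "y # z"]) auto
qed

lemma conj_pairs_transfer:
  assumes "p \<in> lists X" "q \<in> lists X" "conj_pairs p = conj_pairs q"
    and "w \<in> lists X" "w' \<in> lists X" "w @ p =\<^sub>M p @ w'"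
  shows "w @ q =\<^sub>M q @ w'"
proof -
  obtain a where a: "a \<in> lists (Collect atom)" "a =\<^sub>M w" using exists_atom_word[OF assms(4)] by auto
  obtain z where z: "z \<in> lists X" "a @ p =\<^sub>M p @ z" "a @ q =\<^sub>M q @ z"
    using atom_word_conj[OF assms(1,3) a(1)] by auto
  have "p @ z =\<^sub>M a @ p" using z(2) by (rule pres_eq.sym)
  also have "\<dots> =\<^sub>M w @ p" using pres_eq_append_right[OF a(2)] .
  also have "\<dots> =\<^sub>M p @ w'" by (rule assms(6))
  finally have "z =\<^sub>M w'" using cancel_left[OF assms(1) z(1) assms(5)] by blast
  have "w @ q =\<^sub>M a @ q" using pres_eq_append_right[OF pres_eq.sym[OF a(2)]] .
  also have "\<dots> =\<^sub>M q @ z" by (rule z(3))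
  also have "\<dots> =\<^sub>M q @ w'" using pres_eq_append_left[OF \<open>z =\<^sub>M w'\<close>] .
  finally show ?thesis .
qed

lemma conj_pairs_snoc:
  assumes "p \<in> lists X" "q \<in> lists X" "conj_pairs p = conj_pairs q" "y \<in> X"
  shows "conj_pairs (p @ [y]) = conj_pairs (q @ [y])"
proof -
  have transfer: "x # q @ [y] =\<^sub>M q @ [y] @ [z]"
    if pq: "p \<in> lists X" "q \<in> lists X" "conj_pairs p = conj_pairs q" and xz: "x \<in> X" "z \<in> X"
      and h: "x # p @ [y] =\<^sub>M p @ [y] @ [z]" for p q x z
  proof -
    obtain c where c: "c \<in> lists X" "[x] @ p =\<^sub>M p @ c" using normal_right[OF pq(1), of "[x]"] xz by auto
    have "p @ c @ [y] =\<^sub>M x # p @ [y]" using pres_eq.sym[OF pres_eq_append_right[OF c(2), of "[y]"]] by simp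
    also have "\<dots> =\<^sub>M p @ [y] @ [z]" by (rule h)
    finally have "c @ [y] =\<^sub>M [y] @ [z]" using cancel_left[OF pq(1)] c(1) assms(4) xz(2) by simp
    have "x # q @ [y] =\<^sub>M q @ c @ [y]"
      using pres_eq_append_right[OF conj_pairs_transfer[OF pq _ c(1,2)], of "[y]"] xz(1) by simp
    also have "\<dots> =\<^sub>M q @ [y] @ [z]" using pres_eq_append_left[OF \<open>c @ [y] =\<^sub>M [y] @ [z]\<close>] .
    finally show ?thesis .
  qed
  show ?thesis
    unfolding conj_pairs_def using transfer[OF assms(1-3)] transfer[OF assms(2,1) assms(3)[symmetric]]
    by auto
qed

lemma conj_pairs_append_imp_commute:
  assumes "q \<in> lists X" "s \<in> lists X" "conj_pairs q = conj_pairs (q @ s)" "w \<in> lists X"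
  shows "s @ w =\<^sub>M w @ s"
proof -
  obtain c where c: "c \<in> lists X" "q @ w =\<^sub>M c @ q" using normal_left[OF assms(1,4)] by auto
  have "q @ s @ w =\<^sub>M c @ q @ s"
    using conj_pairs_transfer[OF assms(1) _ assms(3) c(1) assms(4) pres_eq.sym[OF c(2)]] assms(1,2)
    by (simp add: pres_eq.sym)
  also have "\<dots> =\<^sub>M q @ w @ s" using pres_eq_append_right[OF pres_eq.sym[OF c(2)], of s] by simp
  finally show ?thesis using cancel_left[OF assms(1)] assms(2,4) by simp
qed

fun label_word :: "'a list \<Rightarrow> 'a list \<Rightarrow> ('a \<times> ('a \<times> 'a) set) list" where
  "label_word p [] = []"
| "label_word p (y # u) = (y, conj_pairs p) # label_word (p @ [y]) u"

lemma label_word_cong: "p =\<^sub>M p' \<Longrightarrow> label_word p u = label_word p' u"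
  by (induction u arbitrary: p p') (simp_all add: conj_pairs_cong pres_eq_append_right)

lemma length_label_word [simp]: "length (label_word p u) = length u"
  by (induction u arbitrary: p) auto

lemma map_fst_label_word [simp]: "map fst (label_word p u) = u"
  by (induction u arbitrary: p) auto

lemma set_label_word: "u \<in> lists X \<Longrightarrow> set (label_word p u) \<subseteq> X \<times> Pow (X \<times> X)"
  by (induction u arbitrary: p) (auto simp: conj_pairs_def)

text \<open>Scan \<open>u'\<close> from the left. A letter of \<open>u'\<close> outside the embedding is absorbed into
  \<open>s\<close>. A letter \<open>y\<close> matched with the next letter of \<open>u\<close> carries the same label, so
  \<open>conj_pairs q = conj_pairs (q @ s)\<close>, hence \<open>s\<close> commutes with \<open>y\<close> and \<open>y\<close> moves to the front.\<close>

lemma label_word_subseq_imp_divides: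
  assumes "subseq (label_word p u) (label_word (q @ s) u')"
    and "p \<in> lists X" "q \<in> lists X" "s \<in> lists X" "u \<in> lists X" "u' \<in> lists X"
    and "conj_pairs p = conj_pairs q"
  shows "\<exists>t\<in>lists X. s @ u' =\<^sub>M u @ t \<and> length t = length s + length u' - length u"
  using assms
proof (induction u' arbitrary: p q s u)
  case Nil
  then have "u = []" by (metis length_0_conv length_label_word list_emb_Nil2 label_word.simps(1))
  then show ?case using Nil.prems(4) pres_eq.refl by auto
next
  case (Cons y u'')
  note IH = Cons.IH and prems = Cons.prems
  have y: "y \<in> X" "u'' \<in> lists X" using prems(6) by auto
  show ?case
  proof (cases u)
    case Nil
    then show ?thesis using prems(4) y pres_eq.refl by (intro bexI[of _ "s @ y # u''"]) auto
  next
    case (Cons x u0)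
    have u0: "u0 \<in> lists X" using prems(5) Cons by auto
    have sub: "subseq ((x, conj_pairs p) # label_word (p @ [x]) u0)
        ((y, conj_pairs (q @ s)) # label_word (q @ s @ [y]) u'')"
      using prems(1) Cons by simp
    show ?thesis
    proof (cases "(x, conj_pairs p) = (y, conj_pairs (q @ s))")
      case False
      then have "subseq (label_word p u) (label_word (q @ (s @ [y])) u'')" using sub Cons by simp
      moreover have "s @ [y] \<in> lists X" using prems(4) y by simp
      ultimately obtain t where "t \<in> lists X" "(s @ [y]) @ u'' =\<^sub>M u @ t"
          "length t = length (s @ [y]) + length u'' - length u"
        using IH[of p u q "s @ [y]"] prems(2,3,5,7) y(2) by blast
      then show ?thesis by auto
    next
      case True
      then have "x = y" and same_label: "conj_pairs p = conj_pairs (q @ s)" by auto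
      have comm: "s @ [y] =\<^sub>M [y] @ s"
        using conj_pairs_append_imp_commute[OF prems(3,4), of "[y]"] prems(7) same_label y by simp
      have "label_word (q @ s @ [y]) u'' = label_word ((q @ [y]) @ s) u''"
        using label_word_cong[OF pres_eq_append_left[OF comm, of q]] by simp
      then have "subseq (label_word (p @ [y]) u0) (label_word ((q @ [y]) @ s) u'')"
        using sub True by simp
      moreover have "conj_pairs (p @ [y]) = conj_pairs (q @ [y])"
        using conj_pairs_snoc[OF prems(2,3,7) y(1)] .
      moreover have "p @ [y] \<in> lists X" "q @ [y] \<in> lists X" using prems(2,3) y by auto
      ultimately obtain t where t: "t \<in> lists X" "s @ u'' =\<^sub>M u0 @ t"
          "length t = length s + length u'' - length u0"
        using IH[of "p @ [y]" u0 "q @ [y]" s] prems(4) u0 y(2) by blast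
      have "s @ y # u'' =\<^sub>M y # s @ u''" using pres_eq_append_right[OF comm, of u''] by simp
      also have "\<dots> =\<^sub>M y # u0 @ t" using pres_eq_append_left[OF t(2), of "[y]"] by simp
      finally show ?thesis using t Cons \<open>x = y\<close> by auto
    qed
  qed
qed

lemma label_word_subseq_imp_prefix:
  assumes "subseq (label_word [] u) (label_word [] u')" "u \<in> lists X" "u' \<in> lists X"
  shows "\<exists>t\<in>lists X. u' =\<^sub>M u @ t \<and> length u' = length u + length t"
proof -
  obtain t where t: "t \<in> lists X" "u' =\<^sub>M u @ t" "length t = length u' - length u"
    using label_word_subseq_imp_divides[of "[]" u "[]" "[]" u'] assms by auto
  moreover have "length u \<le> length u'" using list_emb_length[OF assms(1)] by simp
  ultimately show ?thesis by auto
qed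

section \<open>Minimal pairs and the maximal length ratio\<close>

definition equal_pairs :: "('a list \<times> 'a list) set" where
  "equal_pairs = {(u, v). u \<in> lists X \<and> v \<in> lists X \<and> u =\<^sub>M v \<and> u \<noteq> []}"

definition pair_emb :: "'a list \<times> 'a list \<Rightarrow> 'a list \<times> 'a list \<Rightarrow> bool" where
  "pair_emb a b \<longleftrightarrow>
     subseq (label_word [] (fst a)) (label_word [] (fst b)) \<and>
     subseq (label_word [] (snd a)) (label_word [] (snd b))"

definition minimal_pairs :: "('a list \<times> 'a list) set" where
  "minimal_pairs = {a \<in> equal_pairs. \<forall>b\<in>equal_pairs. pair_emb b a \<longrightarrow> b = a}"

text \<open>Tagging the two label words and concatenating them lets Higman's lemma for words over
  one finite alphabet handle pairs.\<close>

definition pair_code :: "'a list \<times> 'a list \<Rightarrow> (bool \<times> 'a \<times> ('a \<times> 'a) set) list" where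
  "pair_code a = map (Pair True) (label_word [] (fst a)) @ map (Pair False) (label_word [] (snd a))"

lemma subseq_pair_code_imp_pair_emb:
  assumes "subseq (pair_code a) (pair_code b)"
  shows "pair_emb a b"
proof -
  have "map snd (filter fst (pair_code c)) = label_word [] (fst c)"
    and "map snd (filter (Not \<circ> fst) (pair_code c)) = label_word [] (snd c)" for c
    unfolding pair_code_def by (simp_all add: filter_map comp_def)
  then show ?thesis
    unfolding pair_emb_def
    using subseq_map[OF subseq_filter[OF assms, of fst], of snd]
      subseq_map[OF subseq_filter[OF assms, of "Not \<circ> fst"], of snd]
    by simp
qed

lemma set_pair_code:
  assumes "a \<in> equal_pairs"
  shows "set (pair_code a) \<subseteq> UNIV \<times> X \<times> Pow (X \<times> X)"
proof -
  have "fst a \<in> lists X" "snd a \<in> lists X" using assms by (auto simp: equal_pairs_def)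
  then have "set (label_word [] (fst a)) \<subseteq> X \<times> Pow (X \<times> X)"
    and "set (label_word [] (snd a)) \<subseteq> X \<times> Pow (X \<times> X)"
    by (simp_all add: set_label_word)
  then show ?thesis unfolding pair_code_def by auto
qed

lemma pair_emb_same_length_imp_eq:
  assumes "pair_emb a b" "length (fst a) = length (fst b)" "length (snd a) = length (snd b)"
  shows "a = b"
proof -
  have "label_word [] (fst a) = label_word [] (fst b)"
    and "label_word [] (snd a) = label_word [] (snd b)"
    using assms unfolding pair_emb_def by (simp_all add: subseq_same_length)
  then have "map fst (label_word [] (fst a)) = map fst (label_word [] (fst b))"
    and "map fst (label_word [] (snd a)) = map fst (label_word [] (snd b))"
    by simp_all
  then show ?thesis by (simp add: prod_eq_iff)
qed

lemma finite_minimal_pairs: "finite minimal_pairs"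
proof (rule ccontr)
  assume "infinite minimal_pairs"
  then obtain f :: "nat \<Rightarrow> _" where f: "inj f" "range f \<subseteq> minimal_pairs"
    unfolding infinite_iff_countable_subset by blast
  have f_rel: "f i \<in> equal_pairs" for i using f(2) unfolding minimal_pairs_def by blast
  have "pair_code (f i) \<in> lists (UNIV \<times> X \<times> Pow (X \<times> X))" for i
    using set_pair_code[OF f_rel[of i]] by auto
  then have "good subseq (pair_code \<circ> f)"
    using finite_gens by (intro higman[of "UNIV \<times> X \<times> Pow (X \<times> X)"]) auto
  then obtain i j where "i < j" "subseq (pair_code (f i)) (pair_code (f j))"
    unfolding good_def by auto
  then have "pair_emb (f i) (f j)" by (simp add: subseq_pair_code_imp_pair_emb)
  then have "f i = f j" using f(2) f_rel[of i] unfolding minimal_pairs_def by blast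
  then show False using f(1) \<open>i < j\<close> by (simp add: inj_eq)
qed

lemma pair_emb_split:
  assumes "a \<in> equal_pairs" "b \<in> equal_pairs" "pair_emb b a" "b \<noteq> a"
  shows "\<exists>c\<in>equal_pairs. length (fst a) = length (fst b) + length (fst c)
                    \<and> length (snd a) = length (snd b) + length (snd c)"
proof -
  obtain u' v' u v where a: "a = (u', v')" and b: "b = (u, v)" by fastforce
  have uv': "u' \<in> lists X" "v' \<in> lists X" "u' =\<^sub>M v'" using assms(1) a by (auto simp: equal_pairs_def)
  have uv: "u \<in> lists X" "v \<in> lists X" "u =\<^sub>M v" using assms(2) b by (auto simp: equal_pairs_def)
  have "subseq (label_word [] u) (label_word [] u')" "subseq (label_word [] v) (label_word [] v')"
    using assms(3) a b unfolding pair_emb_def by simp_all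
  then obtain t t' where t: "t \<in> lists X" "u' =\<^sub>M u @ t" "length u' = length u + length t"
    and t': "t' \<in> lists X" "v' =\<^sub>M v @ t'" "length v' = length v + length t'"
    using label_word_subseq_imp_prefix uv(1,2) uv'(1,2) by meson
  have "u @ t =\<^sub>M u'" using t(2) by (rule pres_eq.sym)
  also have "\<dots> =\<^sub>M v'" by (rule uv'(3))
  also have "\<dots> =\<^sub>M v @ t'" by (rule t'(2))
  also have "\<dots> =\<^sub>M u @ t'" using pres_eq_append_right[OF pres_eq.sym[OF uv(3)]] .
  finally have "t =\<^sub>M t'" using cancel_left uv(1) t(1) t'(1) by blast
  moreover have "t \<noteq> []"
  proof
    assume "t = []"
    then have "t' = []" using eq_Nil_imp_Nil[OF t'(1)] pres_eq.sym[OF \<open>t =\<^sub>M t'\<close>] by simp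
    then show False
      using pair_emb_same_length_imp_eq[OF assms(3)] assms(4) \<open>t = []\<close> t(3) t'(3) a b by simp
  qed
  ultimately have "(t, t') \<in> equal_pairs" using t(1) t'(1) by (simp add: equal_pairs_def)
  then show ?thesis using t(3) t'(3) a b by force
qed

lemma length_ratio_le_minimal_pair:
  "a \<in> equal_pairs \<Longrightarrow> \<exists>m\<in>minimal_pairs. length_ratio a \<le> length_ratio m"
proof (induction "length (fst a) + length (snd a)" arbitrary: a rule: less_induct)
  case less
  show ?case
  proof (cases "a \<in> minimal_pairs")
    case True
    then show ?thesis by auto
  next
    case False
    then obtain b where b: "b \<in> equal_pairs" "pair_emb b a" "b \<noteq> a"
      using less.prems unfolding minimal_pairs_def by auto
    then obtain c where c: "c \<in> equal_pairs"
      and len: "length (fst a) = length (fst b) + length (fst c)"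
        "length (snd a) = length (snd b) + length (snd c)"
      using pair_emb_split less.prems by blast
    have ne: "fst b \<noteq> []" "fst c \<noteq> []" using b(1) c by (auto simp: equal_pairs_def)
    obtain mb where mb: "mb \<in> minimal_pairs" "length_ratio b \<le> length_ratio mb"
      using less.hyps[OF _ b(1)] len ne(2) by auto
    obtain mc where mc: "mc \<in> minimal_pairs" "length_ratio c \<le> length_ratio mc"
      using less.hyps[OF _ c] len ne(1) by auto
    have "length_ratio a \<le> max (length_ratio b) (length_ratio c)"
      using mediant_le_max[of "real (length (fst b))" "real (length (fst c))"] ne len
      by (simp add: length_ratio_def)
    then show ?thesis using mb mc by (metis max_def order.trans)
  qed
qed

lemma max_length_ratio_attained:
  assumes "equal_pairs \<noteq> {}"
  shows "\<exists>q\<in>equal_pairs. \<forall>p\<in>equal_pairs. length_ratio p \<le> length_ratio q"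
proof -
  have "minimal_pairs \<noteq> {}" using assms length_ratio_le_minimal_pair by blast
  moreover have fin: "finite (length_ratio ` minimal_pairs)" using finite_minimal_pairs by simp
  ultimately have "Max (length_ratio ` minimal_pairs) \<in> length_ratio ` minimal_pairs" by simp
  then obtain q where q: "q \<in> minimal_pairs" "length_ratio q = Max (length_ratio ` minimal_pairs)"
    by auto
  have "length_ratio p \<le> length_ratio q" if p: "p \<in> equal_pairs" for p
  proof -
    obtain m where "m \<in> minimal_pairs" "length_ratio p \<le> length_ratio m"
      using length_ratio_le_minimal_pair[OF p] by blast
    moreover have "length_ratio m \<le> length_ratio q" using q(2) fin \<open>m \<in> minimal_pairs\<close> by simp
    ultimately show ?thesis by linarith
  qed
  moreover have "q \<in> equal_pairs" using q(1) unfolding minimal_pairs_def by blast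
  ultimately show ?thesis by blast
qed

lemma rho_length_set_le:
  assumes "\<And>p. p \<in> equal_pairs \<Longrightarrow> length_ratio p \<le> r" "0 \<le> r" "a \<in> lists X"
  shows "rho_set (length_set X R a) \<le> ereal r"
proof (rule rho_set_le[OF finite_length_set[OF assms(3)] assms(2)])
  fix m n assume mn: "m \<in> length_set X R a" "n \<in> length_set X R a" "0 < m" "0 < n"
  then obtain b1 b2 where b: "b1 \<in> lists X" "b1 =\<^sub>M a" "length b1 = m"
    "b2 \<in> lists X" "b2 =\<^sub>M a" "length b2 = n"
    unfolding length_set_def by auto
  then have "b2 =\<^sub>M b1" by (meson pres_eq.sym pres_eq.trans)
  then have "(b2, b1) \<in> equal_pairs" using b mn(4) by (auto simp: equal_pairs_def)
  then show "real m / real n \<le> r" using assms(1) b by (force simp: length_ratio_def)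
qed

lemma length_ratio_le_rho_length_set:
  assumes "(u, v) \<in> equal_pairs"
  shows "ereal (length_ratio (u, v)) \<le> rho_set (length_set X R u)"
proof -
  have uv: "u \<in> lists X" "v \<in> lists X" "v =\<^sub>M u" "u \<noteq> []"
    using assms by (auto simp: equal_pairs_def intro: pres_eq.sym)
  then have "v \<noteq> []" using eq_Nil_imp_Nil pres_eq.sym by blast
  moreover have "length u \<in> length_set X R u" "length v \<in> length_set X R u"
    using uv pres_eq.refl unfolding length_set_def by auto
  ultimately show ?thesis
    using rho_set_ge[OF finite_length_set[OF uv(1)]] uv(4) by (simp add: length_ratio_def)
qed

end

theorem proposition5p4:
  fixes X :: "'a set" and R :: "('a list \<times> 'a list) set"
  assumes "finite X"
    and "R \<subseteq> lists X \<times> lists X"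
    and "normalizing X R"
    and "cancellative X R"
    and "BF X R"
  shows "accepted_elasticity X R"
proof -
  interpret normalizing_cancellative_BF X R
    using assms(1,3-5) by unfold_locales
  show ?thesis
  proof (cases "equal_pairs = {}")
    case True
    have "rho_set (length_set X R []) = 0" by (simp add: length_set_Nil rho_set_def)
    moreover have "rho_set (length_set X R a) \<le> 0" if "a \<in> lists X" for a
      using rho_length_set_le[of 0 a] True that by (simp add: zero_ereal_def)
    ultimately show ?thesis by (intro accepted_elasticityI[of "[]"]) auto
  next
    case False
    then obtain q where q: "q \<in> equal_pairs"
      and max: "\<And>p. p \<in> equal_pairs \<Longrightarrow> length_ratio p \<le> length_ratio q"
      using max_length_ratio_attained by blast
    obtain u v where uv: "q = (u, v)" "u \<in> lists X" using q by (auto simp: equal_pairs_def)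
    have le: "rho_set (length_set X R a) \<le> ereal (length_ratio q)" if "a \<in> lists X" for a
      using rho_length_set_le[OF max _ that] by (simp add: length_ratio_def)
    then have "rho_set (length_set X R u) = ereal (length_ratio q)"
      using length_ratio_le_rho_length_set q uv by (simp add: antisym)
    then show ?thesis using le uv(2) by (intro accepted_elasticityI[of u]) auto
  qed
qed

end
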